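(* Let $N\ge1$, let $\mathsf L=\mathrm{diag}(L_1,\dots,L_N)$ with nonzero complex $L_n$, let $|1\rangle$ be the $N$-column with all entries $1$, and let $\mathsf A$ be an $N\times N$ matrix satisfying $\mathsf L\mathsf A-\mathsf A\mathsf L^{-1}=|1\rangle\langle a|$ for some $N$-row $\langle a|$. For a complex number $\xi$ with $\xi\notin\{L_n,L_n^{-1}\}$ for all $n$, set $\mathsf H_\xi=(\xi-\mathsf L)(\xi-\mathsf L^{-1})^{-1}$ (so $\mathsf H_0=\mathsf L^2$). For functions $f(\mathsf A,F)$ of such a matrix $\mathsf A$ and a nonzero scalar $F$, define the shift $\mathbb T_\xi f(\mathsf A,F)=f(\mathsf A\mathsf H_\xi,-\xi F)$ (note $\mathsf A\mathsf H_\xi$ again satisfies the same type of relation, with row $\langle a|\mathsf H_\xi$). Define $$\tau(\mathsf A,F)=\det(\mathsf 1+\mathsf A),\quad \sigma(\mathsf A,F)=-F^{-1}\det(\mathsf 1+\mathsf A\mathsf H_0^{-1}),\quad \rho(\mathsf A,F)=F\det(\mathsf 1+\mathsf A\mathsf H_0),$$ i.e. $\tau=\Omega$, $\sigma=-F^{-1}\mathbb T_0^{-1}\Omega$, $\rho=F\,\mathbb T_0\Omega$ with $\Omega=\det(\mathsf 1+\mathsf A)$. Then for all nonzero $\xi,\eta\notin\{L_n,L_n^{-1}:n=1,\dots,N\}$, $$(\xi-\eta)\,\tau\,\mathbb T_\xi\mathbb T_\eta\sigma=\mathbb T_\xi\sigma\,\mathbb T_\eta\tau-\mathbb T_\xi\tau\,\mathbb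 T_\eta\sigma,$$ $$(\xi-\eta)\,\rho\,\mathbb T_\xi\mathbb T_\eta\tau=\mathbb T_\xi\tau\,\mathbb T_\eta\rho-\mathbb T_\xi\rho\,\mathbb T_\eta\tau,$$ $$\left(1-\frac{1}{\xi\eta}\right)\mathbb T_\xi\tau\,\mathbb T_\eta\tau=\tau\,\mathbb T_\xi\mathbb T_\eta\tau+\rho\,\mathbb T_\xi\mathbb T_\eta\sigma,$$ all functions being evaluated at the same $(\mathsf A,F)$.
   Context: Here $\mathsf 1$ is the $N\times N$ identity matrix; all matrices $\mathsf H_\xi$ are diagonal and commute. In particular $\mathbb T_\xi F=-\xi F$ for the scalar $F$. *)

theory Defs
  imports "HOL-Analysis.Analysis"
begin

definition diagm :: "complex^'n \<Rightarrow> complex^'n^'n" where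
  "diagm v = (\<chi> i j. if i = j then v $ i else 0)"

definition Lmat :: "complex^'n \<Rightarrow> complex^'n^'n" where
  "Lmat l = diagm l"
definition Linv :: "complex^'n \<Rightarrow> complex^'n^'n" where
  "Linv l = diagm (\<chi> n. inverse (l $ n))"

definition Hm :: "complex^'n \<Rightarrow> complex \<Rightarrow> complex^'n^'n" where
  "Hm l \<xi> = diagm (\<chi> n. (\<xi> - l $ n) / (\<xi> - inverse (l $ n)))"

definition shift :: "complex^'n \<Rightarrow> complex \<Rightarrow>
    (complex^'n^'n \<Rightarrow> complex \<Rightarrow> complex) \<Rightarrow> complex^'n^'n \<Rightarrow> complex \<Rightarrow> complex" where
  "shift l \<xi> f A F = f (A ** Hm l \<xi>) (- \<xi> * F)"

definition tau :: "complex^'n^'n \<Rightarrow> complex \<Rightarrow> complex" where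
  "tau A F = det (mat 1 + A)"

definition sigma :: "complex^'n \<Rightarrow> complex^'n^'n \<Rightarrow> complex \<Rightarrow> complex" where
  "sigma l A F = - inverse F * det (mat 1 + A ** matrix_inv (Hm l 0))"

definition rho :: "complex^'n \<Rightarrow> complex^'n^'n \<Rightarrow> complex \<Rightarrow> complex" where
  "rho l A F = F * det (mat 1 + A ** Hm l 0)"

end

theory Submission
  imports Defs "HOL-Computational_Algebra.Polynomial"
begin

(* Put Omega A d = det (1 + A diag d). Every function in the statement is a multiple of Omega at a
   product of the diagonals of H_xi, H_eta and H_0^(+-1), and right multiplication by a diagonal
   matrix preserves the displacement equation. So all three identities come from the single
   three-term identity
     (x - y) Omega(H_0) Omega(H_x H_y) = x Omega(H_x H_0) Omega(H_y) - y Omega(H_x) Omega(H_y H_0),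
   applied to A, to A H_0^-1, and to A H_(1/eta)^-1 with the parameters xi and 1/eta.

   The displacement equation makes diag (v - L^-1) + A diag (v - L) a diagonal multiple of 1 + A
   minus a rank-one matrix. When 1 + A is invertible, the matrix determinant lemma (for rank one
   and rank two) expresses Omega at one and at two shifts through scalars of the form
   z (vL - 1)^-1 1, and the three-term identity becomes a polynomial identity in these scalars.
   Invertibility is removed by replacing A with tA, which turns both sides into polynomials in t. *)

definition outer :: "'a::times^'m \<Rightarrow> 'a^'n \<Rightarrow> 'a^'n^'m" where
  "outer u w = (\<chi> i j. u$i * w$j)"

definition dotp :: "'a::comm_semiring_0^'n::finite \<Rightarrow> 'a^'n \<Rightarrow> 'a" where
  "dotp z u = (\<Sum>k\<in>UNIV. z$k * u$k)"

lemma dotp_add_left: "dotp (z + z') u = dotp z u + dotp z' u"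
  by (simp add: dotp_def sum.distrib algebra_simps)

lemma dotp_diff_left: "dotp (z - z') u = dotp z u - dotp (z' :: 'a::comm_ring^'n::finite) u"
  by (simp add: dotp_def sum_subtractf algebra_simps)

lemma dotp_scale_left: "dotp (c *s z) u = c * dotp z u"
  by (simp add: dotp_def sum_distrib_left mult_ac)

lemma vector_matrix_mult_outer: "z v* outer u w = dotp z u *s w"
  by (simp add: vec_eq_iff vector_matrix_mult_def outer_def dotp_def sum_distrib_left mult_ac)

lemma matrix_diff_ldistrib: "A ** (B - C) = A ** B - A ** (C :: 'a::ring_1^'n^'m)"
  by (simp add: vec_eq_iff matrix_matrix_mult_def sum_subtractf algebra_simps)

lemma det_add_scaled_rows:
  fixes r :: "'n::finite \<Rightarrow> 'a::comm_ring_1^'n"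
  assumes "finite S"
  shows "det (\<chi> i. if i \<in> S then r i + c i *s w else r i)
       = det (\<chi> i. r i) + (\<Sum>k\<in>S. c k * det (\<chi> i. if i = k then w else r i))"
  using assms
proof (induction S arbitrary: r rule: finite_induct)
  case empty
  then show ?case by simp
next
  case (insert a S)
  define r' where "r' = r(a := r a + c a *s w)"
  have split: "(\<chi> i. if i \<in> insert a S then r i + c i *s w else r i)
      = (\<chi> i. if i \<in> S then r' i + c i *s w else r' i)"
    using insert.hyps by (auto simp: r'_def vec_eq_iff)
  have "det (\<chi> i. r' i) = det (\<chi> i. if i = a then r a + c a *s w else r i)"
    by (rule arg_cong[where f = det]) (auto simp: r'_def vec_eq_iff)
  also have "\<dots> = det (\<chi> i. if i = a then r a else r i) + c a * det (\<chi> i. if i = a then w else r i)"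
    by (simp add: det_row_add det_row_mul)
  also have "(\<chi> i. if i = a then r a else r i) = (\<chi> i. r i)"
    by (simp add: vec_eq_iff)
  finally have first_row:
    "det (\<chi> i. r' i) = det (\<chi> i. r i) + c a * det (\<chi> i. if i = a then w else r i)" .
  have other_rows: "det (\<chi> i. if i = k then w else r' i) = det (\<chi> i. if i = k then w else r i)"
    if "k \<in> S" for k
  proof -
    have ka: "a \<noteq> k" using that insert.hyps by auto
    let ?M = "(\<chi> i. if i = k then w else r i) :: 'a^'n^'n"
    have "(\<chi> i. if i = k then w else r' i) = (\<chi> m. if m = a then row a ?M + c a *s row k ?M else row m ?M)"
      using ka by (auto simp: r'_def vec_eq_iff row_def)
    then show ?thesis using det_row_operation[OF ka] by simp
  qed
  show ?case
    unfolding split insert.IH first_row using insert.hyps other_rows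
    by (simp add: algebra_simps)
qed

lemma det_replace_row:
  fixes R :: "'a::field^'n::finite^'n"
  assumes "z v* R = w"
  shows "det (\<chi> i. if i = k then w else R$i) = z$k * det R"
proof -
  have "w = (\<Sum>i\<in>UNIV. z$i *s row i R)"
    using assms by (auto simp: vec_eq_iff vector_matrix_mult_def row_def sum_component mult.commute)
  then have "(\<chi> i. if i = k then w else R$i)
      = (\<chi> i. if i = k then \<Sum>i\<in>UNIV. z$i *s row i R else row i R)"
    by (simp add: row_def vec_eq_iff)
  then show ?thesis by (simp add: cramer_lemma_transpose)
qed

lemma det_diff_outer:
  fixes R :: "'a::field^'n::finite^'n"
  assumes "z v* R = w"
  shows "det (R - outer u w) = det R * (1 - dotp z u)"
proof -
  have "R - outer u w = (\<chi> i. if i \<in> UNIV then R$i + (- u$i) *s w else R$i)"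
    by (simp add: vec_eq_iff outer_def)
  then have "det (R - outer u w) = det R - (\<Sum>k\<in>UNIV. u$k * det (\<chi> i. if i = k then w else R$i))"
    using det_add_scaled_rows[of UNIV "\<lambda>i. R$i" "\<lambda>i. - u$i" w] by (simp add: sum_negf)
  then show ?thesis
    using assms by (simp add: det_replace_row dotp_def sum_distrib_left algebra_simps)
qed

lemma det_diff_two_outer:
  fixes R :: "'a::field^'n::finite^'n"
  assumes z1: "z1 v* R = w1" and z2: "z2 v* R = w2" and nondeg: "1 - dotp z1 u1 \<noteq> 0"
  shows "det (R - outer u1 w1 - outer u2 w2)
     = det R * ((1 - dotp z1 u1) * (1 - dotp z2 u2) - dotp z2 u1 * dotp z1 u2)"
proof -
  define s where "s = dotp z2 u1 / (1 - dotp z1 u1)"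
  have s: "s * (1 - dotp z1 u1) = dotp z2 u1" using nondeg by (simp add: s_def)
  define z where "z = z2 + s *s z1"
  have "z v* (R - outer u1 w1) = w2 + s *s w1 - (dotp z2 u1 + s * dotp z1 u1) *s w1"
    by (simp add: z_def vector_matrix_mult_diff_rdistrib vector_matrix_left_distrib
        scalar_vector_matrix_assoc vector_matrix_mult_outer z1 z2 dotp_add_left dotp_scale_left)
  also have "\<dots> = w2 + (s * (1 - dotp z1 u1) - dotp z2 u1) *s w1"
    by (simp add: vec_eq_iff algebra_simps)
  finally have "z v* (R - outer u1 w1) = w2 + (s * (1 - dotp z1 u1) - dotp z2 u1) *s w1" .
  then have "z v* (R - outer u1 w1) = w2" by (simp add: s)
  then have "det (R - outer u1 w1 - outer u2 w2) = det (R - outer u1 w1) * (1 - dotp z u2)"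
    by (rule det_diff_outer)
  also have "\<dots> = det R * (1 - dotp z1 u1) * (1 - dotp z2 u2 - s * dotp z1 u2)"
    by (simp add: det_diff_outer[OF z1] z_def dotp_add_left dotp_scale_left)
  also have "\<dots> = det R * ((1 - dotp z1 u1) * (1 - dotp z2 u2) - dotp z2 u1 * dotp z1 u2)"
    by (simp add: s[symmetric] algebra_simps)
  finally show ?thesis .
qed

lemma mult_minus_one_nonzero: "l \<noteq> 0 \<Longrightarrow> v \<noteq> inverse l \<Longrightarrow> v * l - 1 \<noteq> (0::'a::field)"
  by (metis eq_iff_diff_eq_0 inverse_unique mult.commute)

lemma diagm_nth [simp]: "diagm d $ i $ j = (if i = j then d$i else 0)"
  by (simp add: diagm_def)

lemma mult_diagm_nth [simp]: "(A ** diagm d)$i$j = A$i$j * d$j"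
  by (simp add: matrix_matrix_mult_def diagm_def if_distrib cong: if_cong)

lemma diagm_mult_nth [simp]: "(diagm d ** A)$i$j = d$i * A$i$j"
proof -
  have "(diagm d ** A)$i$j = (\<Sum>k\<in>UNIV. if k = i then d$i * A$i$j else 0)"
    unfolding matrix_matrix_mult_def diagm_def vec_lambda_beta by (rule sum.cong) auto
  then show ?thesis by simp
qed

lemma mat_mult_nth: "(mat t ** A)$i$j = t * A$i$j"
proof -
  have "(mat t ** A)$i$j = (\<Sum>k\<in>UNIV. if k = i then t * A$i$j else 0)"
    unfolding matrix_matrix_mult_def mat_def vec_lambda_beta by (rule sum.cong) auto
  then show ?thesis by simp
qed

lemma diagm_mult_diagm: "diagm d ** diagm e = diagm (d * e)"
  by (simp add: vec_eq_iff)

lemma diagm_1: "diagm 1 = mat 1"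
  by (simp add: vec_eq_iff mat_def)

lemma det_diagm: "det (diagm d) = (\<Prod>i\<in>UNIV. d$i)"
  by (subst det_diagonal) (auto simp: diagm_def)

lemma diagm_mult_outer: "diagm p ** outer u w = outer (p * u) w"
  by (simp add: vec_eq_iff outer_def mult.assoc)

lemma matrix_inv_diagm:
  assumes "\<forall>n. d$n \<noteq> 0"
  shows "matrix_inv (diagm d) = diagm (\<chi> n. inverse (d$n))"
proof -
  let ?E = "diagm (\<chi> n. inverse (d$n))"
  have "d * (\<chi> n. inverse (d$n)) = 1"
    using assms by (simp add: vec_eq_iff)
  then have DE: "diagm d ** ?E = mat 1" "?E ** diagm d = mat 1"
    by (simp_all add: diagm_mult_diagm diagm_1 mult.commute)
  then have inv: "diagm d ** matrix_inv (diagm d) = mat 1 \<and> matrix_inv (diagm d) ** diagm d = mat 1"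
    unfolding matrix_inv_def by (rule someI[of _ ?E, OF conjI])
  have "matrix_inv (diagm d) = matrix_inv (diagm d) ** (diagm d ** ?E)"
    by (simp add: DE)
  also have "\<dots> = ?E"
    by (simp add: matrix_mul_assoc inv)
  finally show ?thesis .
qed

definition Omega :: "complex^'n::finite^'n \<Rightarrow> complex^'n \<Rightarrow> complex" where
  "Omega A d = det (mat 1 + A ** diagm d)"

lemma Omega_mult_diagm: "Omega (A ** diagm d) e = Omega A (d * e)"
  by (simp add: Omega_def matrix_mul_assoc[symmetric] diagm_mult_diagm)

lemma Omega_1: "Omega A 1 = det (mat 1 + A)"
  by (simp add: Omega_def diagm_1)

lemma det_diagm_plus_mult_diagm: "det (diagm p + A ** diagm (p * h)) = (\<Prod>i\<in>UNIV. p$i) * Omega A h"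
proof -
  have "diagm p + A ** diagm (p * h) = (mat 1 + A ** diagm h) ** diagm p"
    by (simp add: vec_eq_iff mat_def algebra_simps)
  then show ?thesis by (simp add: Omega_def det_mul det_diagm)
qed

text \<open>The entrywise form of \<open>L A - A L\<^sup>-\<^sup>1 = |1\<rangle>\<langle>a|\<close>; off the set where \<open>l\<^sub>i l\<^sub>j = 1\<close> it
  makes \<open>A\<close> the Cauchy-like matrix \<open>a\<^sub>j / (l\<^sub>i - l\<^sub>j\<^sup>-\<^sup>1)\<close>.\<close>
definition cauchy_like :: "complex^'n \<Rightarrow> complex^'n^'n \<Rightarrow> complex^'n \<Rightarrow> bool" where
  "cauchy_like l A a \<longleftrightarrow> (\<forall>i j. (l$i - inverse (l$j)) * A$i$j = a$j)"

lemma cauchy_likeI: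
  assumes "Lmat l ** A - A ** Linv l = (\<chi> i j. a$j)"
  shows "cauchy_like l A a"
  unfolding cauchy_like_def
proof (intro allI)
  fix i j
  have "(Lmat l ** A - A ** Linv l)$i$j = a$j" using assms by simp
  then show "(l$i - inverse (l$j)) * A$i$j = a$j"
    by (simp add: Lmat_def Linv_def algebra_simps)
qed

lemma cauchy_like_mult_diagm: "cauchy_like l A a \<Longrightarrow> cauchy_like l (A ** diagm d) (a * d)"
  by (simp add: cauchy_like_def mult.assoc)

lemma cauchy_like_scale: "cauchy_like l A a \<Longrightarrow> cauchy_like l (mat t ** A) (t *s a)"
  by (simp add: cauchy_like_def mat_mult_nth mult.left_commute)

definition pvec :: "complex^'n \<Rightarrow> complex \<Rightarrow> complex^'n" where
  "pvec l v = (\<chi> i. v - inverse (l$i))"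

definition qvec :: "complex^'n \<Rightarrow> complex \<Rightarrow> complex^'n" where
  "qvec l v = (\<chi> i. v - l$i)"

definition hvec :: "complex^'n \<Rightarrow> complex \<Rightarrow> complex^'n" where
  "hvec l v = (\<chi> i. (v - l$i) / (v - inverse (l$i)))"

text \<open>\<open>uvec l v $ i = l\<^sub>i\<^sup>-\<^sup>1 / (v - l\<^sub>i\<^sup>-\<^sup>1)\<close>: the column of the rank-one term of the
  displacement equation, divided by the diagonal factor \<open>v - L\<^sup>-\<^sup>1\<close>.\<close>
definition uvec :: "complex^'n \<Rightarrow> complex \<Rightarrow> complex^'n" where
  "uvec l v = (\<chi> i. inverse (v * l$i - 1))"

lemma qvec_eq: "\<forall>i. v \<noteq> inverse (l$i) \<Longrightarrow> qvec l v = pvec l v * hvec l v"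
  by (simp add: vec_eq_iff pvec_def qvec_def hvec_def)

lemma prod_pvec_nonzero: "\<forall>i. v \<noteq> inverse (l$i) \<Longrightarrow> (\<Prod>i\<in>UNIV. pvec l v $ i) \<noteq> 0"
  by (simp add: pvec_def)

text \<open>This is where the displacement equation enters: multiplying \<open>p\<close> by \<open>v - L\<^sup>-\<^sup>1\<close> and \<open>q\<close>
  by \<open>v - L\<close> changes \<open>diag p + A diag q\<close> only by a left diagonal factor and a rank-one term.\<close>
lemma diagm_plus_shift:
  assumes A: "cauchy_like l A a" and l: "\<forall>i. l$i \<noteq> 0" and v: "\<forall>i. v \<noteq> inverse (l$i)"
  shows "diagm (pvec l v * p) + A ** diagm (qvec l v * q)
       = diagm (pvec l v) ** (diagm p + A ** diagm q - outer (uvec l v) (a * l * q))"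
proof -
  have "(diagm (pvec l v * p) + A ** diagm (qvec l v * q))$i$j
      = (diagm (pvec l v) ** (diagm p + A ** diagm q - outer (uvec l v) (a * l * q)))$i$j" for i j
  proof -
    have a: "a$j = (l$i - inverse (l$j)) * A$i$j" using A by (simp add: cauchy_like_def)
    have "v * l$i - 1 \<noteq> 0" using mult_minus_one_nonzero v l by blast
    then show ?thesis
      using l
      by (cases "i = j") (simp_all add: a outer_def pvec_def qvec_def uvec_def field_simps)
  qed
  then show ?thesis by (simp add: vec_eq_iff)
qed

lemma Omega_hvec:
  assumes A: "cauchy_like l A a" and l: "\<forall>i. l$i \<noteq> 0" and v: "\<forall>i. v \<noteq> inverse (l$i)"
    and z: "z v* (mat 1 + A) = a * l"
  shows "Omega A (hvec l v) = Omega A 1 * (1 - dotp z (uvec l v))"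
proof -
  have "(\<Prod>i\<in>UNIV. pvec l v $ i) * Omega A (hvec l v)
      = det (diagm (pvec l v) + A ** diagm (qvec l v))"
    by (simp add: det_diagm_plus_mult_diagm qvec_eq[OF v])
  also have "\<dots> = (\<Prod>i\<in>UNIV. pvec l v $ i) * det (mat 1 + A - outer (uvec l v) (a * l))"
    using diagm_plus_shift[OF A l v, of 1 1] by (simp add: det_mul det_diagm diagm_1)
  also have "\<dots> = (\<Prod>i\<in>UNIV. pvec l v $ i) * (Omega A 1 * (1 - dotp z (uvec l v)))"
    by (simp add: det_diff_outer[OF z] Omega_1)
  finally show ?thesis using prod_pvec_nonzero[OF v] by simp
qed

lemma diagm_plus_two_shifts:
  assumes A: "cauchy_like l A a" and l: "\<forall>i. l$i \<noteq> 0"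
    and x: "\<forall>i. x \<noteq> inverse (l$i)" and y: "\<forall>i. y \<noteq> inverse (l$i)"
  shows "diagm (pvec l x * pvec l y) + A ** diagm (qvec l x * qvec l y)
       = diagm (pvec l x * pvec l y) ** (mat 1 + A - outer (uvec l y) (a * l)
           - outer (\<chi> i. uvec l x $ i / pvec l y $ i) (a * l * qvec l y))"
proof -
  let ?r = "\<chi> i. uvec l x $ i / pvec l y $ i"
  have inner: "diagm (pvec l y) + A ** diagm (qvec l y)
      = diagm (pvec l y) ** (mat 1 + A - outer (uvec l y) (a * l))"
    using diagm_plus_shift[OF A l y, of 1 1] by (simp add: diagm_1)
  have "outer (uvec l x) (a * l * qvec l y) = diagm (pvec l y) ** outer ?r (a * l * qvec l y)"
    using y by (simp add: diagm_mult_outer vec_eq_iff outer_def pvec_def)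
  then show ?thesis
    by (simp add: diagm_plus_shift[OF A l x] inner matrix_mul_assoc diagm_mult_diagm
        matrix_diff_ldistrib)
qed

lemma uvec_partial_fraction:
  assumes l: "l$i \<noteq> 0" and x: "x \<noteq> inverse (l$i)" and y: "y \<noteq> inverse (l$i)"
  shows "(x - y) * (uvec l x $ i / pvec l y $ i) = uvec l y $ i - uvec l x $ i"
proof -
  have "x * l$i - 1 \<noteq> 0" "y * l$i - 1 \<noteq> 0"
    using mult_minus_one_nonzero x y l by blast+
  then show ?thesis using l by (simp add: uvec_def pvec_def field_simps)
qed

lemma Omega_hvec_mult:
  assumes A: "cauchy_like l A a" and l: "\<forall>i. l$i \<noteq> 0"
    and x: "\<forall>i. x \<noteq> inverse (l$i)" and y: "\<forall>i. y \<noteq> inverse (l$i)"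
    and z: "z v* (mat 1 + A) = a * l" and z': "z' v* (mat 1 + A) = a * l * l"
    and nondeg: "Omega A (hvec l y) \<noteq> 0"
  defines "\<beta>x \<equiv> dotp z (uvec l x)" and "\<beta>y \<equiv> dotp z (uvec l y)"
    and "\<gamma>x \<equiv> dotp z' (uvec l x)" and "\<gamma>y \<equiv> dotp z' (uvec l y)"
  shows "(x - y) * Omega A (hvec l x * hvec l y)
       = Omega A 1 * ((1 - \<beta>y) * (x - y - y * (\<beta>y - \<beta>x) + (\<gamma>y - \<gamma>x)) - (y * \<beta>y - \<gamma>y) * (\<beta>y - \<beta>x))"
proof -
  define r where "r = (\<chi> i. uvec l x $ i / pvec l y $ i)"
  define P where "P = (\<Prod>i\<in>UNIV. (pvec l x * pvec l y) $ i)"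
  have "P \<noteq> 0" using x y by (simp add: P_def pvec_def)
  have rk: "(x - y) * r$k = uvec l y $ k - uvec l x $ k" for k
    unfolding r_def vec_lambda_beta by (rule uvec_partial_fraction) (use l x y in auto)
  have r: "(x - y) * dotp w r = dotp w (uvec l y) - dotp w (uvec l x)" for w
    unfolding dotp_def sum_distrib_left sum_subtractf[symmetric]
    by (rule sum.cong) (simp_all add: mult.left_commute[of "x - y"] rk right_diff_distrib)
  have "(y *s z - z') v* (mat 1 + A) = y *s (a * l) - a * l * l"
    by (simp only: vector_matrix_mult_diff_distrib scalar_vector_matrix_assoc z z')
  then have z2: "(y *s z - z') v* (mat 1 + A) = a * l * qvec l y"
    by (simp add: vec_eq_iff qvec_def algebra_simps)
  have "1 - \<beta>y \<noteq> 0" using nondeg Omega_hvec[OF A l y z] by (auto simp: \<beta>y_def)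
  have "P * Omega A (hvec l x * hvec l y) = det (diagm (pvec l x * pvec l y) + A ** diagm (qvec l x * qvec l y))"
  proof -
    have "qvec l x * qvec l y = (pvec l x * pvec l y) * (hvec l x * hvec l y)"
      by (simp add: qvec_eq[OF x] qvec_eq[OF y] mult_ac)
    then show ?thesis by (simp only: det_diagm_plus_mult_diagm P_def)
  qed
  also have "\<dots> = P * det (mat 1 + A - outer (uvec l y) (a * l) - outer r (a * l * qvec l y))"
    by (simp add: diagm_plus_two_shifts[OF A l x y] det_mul det_diagm P_def r_def)
  also have "\<dots> = P * (Omega A 1 * ((1 - \<beta>y) * (1 - dotp (y *s z - z') r)
      - dotp (y *s z - z') (uvec l y) * dotp z r))"
    using det_diff_two_outer[OF z z2 \<open>1 - \<beta>y \<noteq> 0\<close>[unfolded \<beta>y_def]]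
    by (simp add: Omega_1 \<beta>y_def)
  finally have "Omega A (hvec l x * hvec l y) = Omega A 1 * ((1 - \<beta>y) * (1 - (y * dotp z r - dotp z' r))
      - (y * \<beta>y - \<gamma>y) * dotp z r)"
    using \<open>P \<noteq> 0\<close> by (simp add: dotp_diff_left dotp_scale_left \<beta>y_def \<gamma>y_def)
  then show ?thesis
    using r[of z] r[of z'] unfolding \<beta>x_def \<beta>y_def \<gamma>x_def \<gamma>y_def by algebra
qed

lemma Omega_hirota_nondegenerate:
  assumes A: "cauchy_like l A a" and l: "\<forall>i. l$i \<noteq> 0"
    and x: "\<forall>i. x \<noteq> inverse (l$i)" and y: "\<forall>i. y \<noteq> inverse (l$i)"
    and nondeg: "Omega A 1 \<noteq> 0" "Omega A (hvec l 0) \<noteq> 0" "Omega A (hvec l y) \<noteq> 0"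
  shows "(x - y) * Omega A (hvec l 0) * Omega A (hvec l x * hvec l y)
       = x * Omega A (hvec l x * hvec l 0) * Omega A (hvec l y)
         - y * Omega A (hvec l x) * Omega A (hvec l y * hvec l 0)"
proof -
  have "invertible (mat 1 + A)"
    using nondeg(1) by (simp add: Omega_1 invertible_det_nz)
  then obtain B where B: "B ** (mat 1 + A) = mat 1" unfolding invertible_def by blast
  define z where "z = (a * l) v* B"
  define z' where "z' = (a * l * l) v* B"
  have z: "z v* (mat 1 + A) = a * l" and z': "z' v* (mat 1 + A) = a * l * l"
    by (simp_all add: z_def z'_def vector_matrix_mul_assoc B)
  have zero: "\<forall>i. (0::complex) \<noteq> inverse (l$i)" using l by simp
  note single = Omega_hvec[OF A l _ z]
  note double = Omega_hvec_mult[OF A l _ _ z z']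
  \<comment> \<open>what remains holds for arbitrary values of the six scalars \<open>dotp z (uvec l _)\<close>, \<open>dotp z' (uvec l _)\<close>\<close>
  show ?thesis
    using single[OF zero] single[OF x] single[OF y]
      double[OF x y nondeg(3)] double[OF x zero nondeg(2)] double[OF y zero nondeg(2)]
    by algebra
qed

lemma det_poly_entries:
  fixes P :: "'n::finite \<Rightarrow> 'n \<Rightarrow> 'a::comm_ring_1 poly"
  shows "\<exists>r. \<forall>t. det (\<chi> i j. poly (P i j) t) = poly r t"
proof
  let ?r = "\<Sum>p\<in>{p. p permutes (UNIV::'n set)}. smult (of_int (sign p)) (\<Prod>i\<in>UNIV. P i (p i))"
  show "\<forall>t. det (\<chi> i j. poly (P i j) t) = poly ?r t"
    by (simp add: det_def poly_sum poly_prod)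
qed

lemma Omega_scaled_poly: "\<exists>r. (\<forall>t. Omega (mat t ** A) d = poly r t) \<and> poly r 0 = 1"
proof -
  have entries: "mat 1 + (mat t ** A) ** diagm d
      = (\<chi> i j. poly [:if i = j then 1 else 0, (A ** diagm d)$i$j:] t)" for t
    by (simp add: vec_eq_iff mat_mult_nth) (simp add: mat_def)
  obtain r where "\<forall>t. det (\<chi> i j. poly [:if i = j then 1 else 0, (A ** diagm d)$i$j:] t) = poly r t"
    using det_poly_entries[of "\<lambda>i j. [:if i = j then 1 else 0, (A ** diagm d)$i$j:]"] by blast
  then have "\<forall>t. Omega (mat t ** A) d = poly r t"
    by (simp add: Omega_def entries)
  moreover from this[rule_format, of 0] have "poly r 0 = 1"
    by (simp add: Omega_def)
  ultimately show ?thesis by blast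
qed

lemma poly_eq_0_off_zeros:
  fixes f g :: "'a::{idom, ring_char_0} poly"
  assumes "g \<noteq> 0" and "\<And>t. poly g t \<noteq> 0 \<Longrightarrow> poly f t = 0"
  shows "f = 0"
proof -
  have "\<forall>t. poly (f * g) t = 0" using assms(2) by auto
  then have "f * g = 0" by (simp only: poly_all_0_iff_0)
  then show ?thesis using assms(1) by simp
qed

text \<open>For \<open>t A\<close> in place of \<open>A\<close> both sides are polynomials in \<open>t\<close>, and the nondegenerate case
  applies off the zeros of a polynomial that equals \<open>1\<close> at \<open>t = 0\<close>.\<close>
lemma Omega_hirota:
  assumes A: "cauchy_like l A a" and l: "\<forall>i. l$i \<noteq> 0"
    and x: "\<forall>i. x \<noteq> inverse (l$i)" and y: "\<forall>i. y \<noteq> inverse (l$i)"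
  shows "(x - y) * Omega A (hvec l 0) * Omega A (hvec l x * hvec l y)
       = x * Omega A (hvec l x * hvec l 0) * Omega A (hvec l y)
         - y * Omega A (hvec l x) * Omega A (hvec l y * hvec l 0)"
proof -
  obtain P where P: "\<And>d t. Omega (mat t ** A) d = poly (P d) t" and P0: "\<And>d. poly (P d) 0 = 1"
    using Omega_scaled_poly[of A] by metis
  define f where "f = smult (x - y) (P (hvec l 0) * P (hvec l x * hvec l y))
    - smult x (P (hvec l x * hvec l 0) * P (hvec l y)) + smult y (P (hvec l x) * P (hvec l y * hvec l 0))"
  have "f = 0"
  proof (rule poly_eq_0_off_zeros)
    show "P 1 * P (hvec l 0) * P (hvec l y) \<noteq> 0"
      using P0[of 1] P0[of "hvec l 0"] P0[of "hvec l y"] by auto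
    show "poly f t = 0" if "poly (P 1 * P (hvec l 0) * P (hvec l y)) t \<noteq> 0" for t
    proof -
      have "Omega (mat t ** A) 1 \<noteq> 0" "Omega (mat t ** A) (hvec l 0) \<noteq> 0"
        "Omega (mat t ** A) (hvec l y) \<noteq> 0"
        using that by (simp_all add: P)
      from Omega_hirota_nondegenerate[OF cauchy_like_scale[OF A] l x y this]
      show ?thesis by (simp add: f_def P[symmetric] algebra_simps)
    qed
  qed
  then have "poly f 1 = 0" by simp
  then show ?thesis by (simp add: f_def P[symmetric] algebra_simps)
qed

lemma Hm_eq: "Hm l v = diagm (hvec l v)"
  by (simp add: Hm_def hvec_def)

lemma shift_eq: "shift l v f A F = f (A ** diagm (hvec l v)) (- v * F)"
  by (simp add: shift_def Hm_eq)

lemma tau_eq_Omega: "tau A F = Omega A 1"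
  by (simp add: tau_def Omega_1)

lemma rho_eq_Omega: "rho l A F = F * Omega A (hvec l 0)"
  by (simp add: rho_def Omega_def Hm_eq)

lemma hvec_0_nonzero: "l$n \<noteq> 0 \<Longrightarrow> hvec l 0 $ n \<noteq> 0"
  by (simp add: hvec_def)

lemma sigma_eq_Omega:
  assumes "\<forall>n. l$n \<noteq> 0"
  shows "sigma l A F = - inverse F * Omega A (\<chi> n. inverse (hvec l 0 $ n))"
  using assms by (simp add: sigma_def Omega_def Hm_eq matrix_inv_diagm hvec_0_nonzero)

lemma Omega_hirota_inverse_weight:
  assumes A: "cauchy_like l A a" and l: "\<forall>i. l$i \<noteq> 0"
    and x: "\<forall>i. x \<noteq> inverse (l$i)" and y: "\<forall>i. y \<noteq> inverse (l$i)"
  defines "e \<equiv> \<chi> n. inverse (hvec l 0 $ n)"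
  shows "(x - y) * Omega A 1 * Omega A (hvec l x * (hvec l y * e))
       = x * Omega A (hvec l x) * Omega A (hvec l y * e) - y * Omega A (hvec l x * e) * Omega A (hvec l y)"
proof -
  have "e * hvec l 0 = 1" using l by (simp add: vec_eq_iff e_def hvec_0_nonzero)
  then have "e * (hvec l x * hvec l y) = hvec l x * (hvec l y * e)" "e * hvec l 0 = 1"
    "e * (hvec l x * hvec l 0) = hvec l x" "e * (hvec l y * hvec l 0) = hvec l y"
    "e * hvec l x = hvec l x * e" "e * hvec l y = hvec l y * e"
    by (simp_all add: mult_ac) (metis mult.left_commute mult_1_right)+
  with Omega_hirota[OF cauchy_like_mult_diagm[OF A] l x y, of e] show ?thesis
    by (simp add: Omega_mult_diagm)
qed

lemma hvec_inverse_reflection: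
  assumes "l$n \<noteq> 0" "y \<noteq> 0" "y \<noteq> l$n" "y \<noteq> inverse (l$n)"
  shows "inverse (hvec l (inverse y) $ n) * hvec l 0 $ n = hvec l y $ n"
proof -
  have "y * l$n - 1 \<noteq> 0" using assms(1,4) by (rule mult_minus_one_nonzero)
  then show ?thesis using assms(1-3) by (simp add: hvec_def field_simps)
qed

text \<open>\<open>Omega_hirota\<close> for \<open>A H\<^bsub>1/y\<^esub>\<^sup>-\<^sup>1\<close> with the parameters \<open>x\<close> and \<open>1/y\<close>, since
  \<open>H\<^bsub>1/y\<^esub>\<^sup>-\<^sup>1 H\<^sub>0 = H\<^sub>y\<close>.\<close>
lemma Omega_hirota_reflected:
  assumes A: "cauchy_like l A a" and l: "\<forall>i. l$i \<noteq> 0"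
    and x: "\<forall>i. x \<noteq> inverse (l$i)" and y: "y \<noteq> 0" "\<forall>i. y \<noteq> l$i \<and> y \<noteq> inverse (l$i)"
  defines "e \<equiv> \<chi> n. inverse (hvec l 0 $ n)"
  shows "(x - inverse y) * Omega A (hvec l y) * Omega A (hvec l x)
       = x * Omega A (hvec l x * hvec l y) * Omega A 1
         - inverse y * Omega A (hvec l x * (hvec l y * e)) * Omega A (hvec l 0)"
proof -
  define w where "w = (\<chi> n. inverse (hvec l (inverse y) $ n))"
  have y': "\<forall>i. inverse y \<noteq> inverse (l$i)" using y by auto
  have "inverse y \<noteq> l$n" for n
    using y by (metis inverse_inverse_eq)
  then have "hvec l (inverse y) $ n \<noteq> 0" for n
    using y' by (simp add: hvec_def)
  then have w: "w * hvec l (inverse y) = 1" by (simp add: vec_eq_iff w_def)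
  have wh0: "w * hvec l 0 = hvec l y"
    using y l by (simp add: vec_eq_iff w_def hvec_inverse_reflection)
  have "e * hvec l 0 = 1" using l by (simp add: vec_eq_iff e_def hvec_0_nonzero)
  then have "w = hvec l y * e" by (metis wh0 mult.assoc mult.commute mult_1_right)
  then have "w * (hvec l x * hvec l (inverse y)) = hvec l x"
    "w * (hvec l x * hvec l 0) = hvec l x * hvec l y" "w * hvec l x = hvec l x * (hvec l y * e)"
    "w * (hvec l (inverse y) * hvec l 0) = hvec l 0"
    using w wh0 by (simp_all add: mult_ac) (metis mult.left_commute mult_1_right)+
  with Omega_hirota[OF cauchy_like_mult_diagm[OF A] l x y', of w] show ?thesis
    by (simp add: Omega_mult_diagm w wh0)
qed

theorem proposition4p1p1:
  fixes l :: "complex^'n" and A :: "complex^'n^'n" and F \<xi> \<eta> :: complex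
  assumes hl: "\<forall>n. l $ n \<noteq> 0"
    and hA: "\<exists>a :: complex^'n. Lmat l ** A - A ** Linv l = (\<chi> i j. a $ j)"
    and hF: "F \<noteq> 0"
    and h\<xi>: "\<xi> \<noteq> 0" "\<forall>n. \<xi> \<noteq> l $ n \<and> \<xi> \<noteq> inverse (l $ n)"
    and h\<eta>: "\<eta> \<noteq> 0" "\<forall>n. \<eta> \<noteq> l $ n \<and> \<eta> \<noteq> inverse (l $ n)"
  shows
    "((\<xi> - \<eta>) * tau A F * shift l \<xi> (shift l \<eta> (sigma l)) A F
       = shift l \<xi> (sigma l) A F * shift l \<eta> tau A F
         - shift l \<xi> tau A F * shift l \<eta> (sigma l) A F)
   \<and> ((\<xi> - \<eta>) * rho l A F * shift l \<xi> (shift l \<eta> tau) A F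
       = shift l \<xi> tau A F * shift l \<eta> (rho l) A F
         - shift l \<xi> (rho l) A F * shift l \<eta> tau A F)
   \<and> ((1 - 1 / (\<xi> * \<eta>)) * shift l \<xi> tau A F * shift l \<eta> tau A F
       = tau A F * shift l \<xi> (shift l \<eta> tau) A F
         + rho l A F * shift l \<xi> (shift l \<eta> (sigma l)) A F)"
proof -
  obtain a where "Lmat l ** A - A ** Linv l = (\<chi> i j. a $ j)" using hA by blast
  then have A: "cauchy_like l A a" by (rule cauchy_likeI)
  have x: "\<forall>i. \<xi> \<noteq> inverse (l$i)" and y: "\<forall>i. \<eta> \<noteq> inverse (l$i)" using h\<xi> h\<eta> by auto
  note I1 = Omega_hirota_inverse_weight[OF A hl x y]
  note I2 = Omega_hirota[OF A hl x y]
  note I3 = Omega_hirota_reflected[OF A hl x h\<eta>]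
  show ?thesis
    unfolding shift_eq tau_eq_Omega rho_eq_Omega sigma_eq_Omega[OF hl] Omega_mult_diagm mult_1_right
    using I1 I2 I3 hF h\<xi>(1) h\<eta>(1) by (intro conjI; simp add: field_simps; algebra)
qed

end
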